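(* Let $p$ be a prime and $a_p(n)=\big[\frac{n}{p-1}\big]+v_p\big(\big[\frac{n}{p-1}\big]!\big)$ for integers $n\ge0$. Then $a_p(n)\geq a_p(k)+a_p(l)$ whenever $n\geq k+l$ (with $k,l\ge0$), and $a_p(m+n)\geq a_p(m+1)+v_p(n!)$ for all integers $m\ge 0$, $n\ge1$.
   Context: $[\alpha]$ denotes the integer part of $\alpha$ and $v_p$ the $p$-adic valuation. *)

theory Defs
  imports "HOL-Computational_Algebra.Primes"
begin

definition a_p :: "nat \<Rightarrow> nat \<Rightarrow> nat" where
  "a_p p n = n div (p - 1) + multiplicity p (fact (n div (p - 1)) :: nat)"

end

theory Submission
  imports Defs
begin

text \<open>Write \<open>a_p p n = f (n div (p - 1))\<close> with \<open>f j = j + v\<^sub>p(j!)\<close>. Since \<open>k! l!\<close> divides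
  \<open>(k + l)!\<close>, both \<open>f\<close> and \<open>n \<mapsto> n div (p - 1)\<close> are superadditive, which gives the first claim.
  For the second, Legendre's recursion \<open>v\<^sub>p(n!) = n div p + v\<^sub>p((n div p)!)\<close> yields
  \<open>(p - 1) v\<^sub>p(n!) \<le> n - 1\<close>, so \<open>v\<^sub>p(n!) \<le> (n - 1) div (p - 1)\<close>, and splitting \<open>m + n\<close> as
  \<open>(m + 1) + (n - 1)\<close> reduces it to the same superadditivity.\<close>

lemma multiplicity_fact_add_le:
  fixes p :: nat
  assumes "prime p"
  shows "multiplicity p (fact a :: nat) + multiplicity p (fact b :: nat)
           \<le> multiplicity p (fact (a + b) :: nat)"
proof -
  have "multiplicity p (fact a :: nat) + multiplicity p (fact b :: nat)
          = multiplicity p (fact a * fact b :: nat)"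
    using assms by (simp add: prime_elem_multiplicity_mult_distrib)
  also have "\<dots> \<le> multiplicity p (fact (a + b) :: nat)"
    by (rule dvd_imp_multiplicity_le[OF fact_fact_dvd_fact]) simp
  finally show ?thesis .
qed

lemma multiplicity_fact_mono:
  fixes p :: nat
  assumes "prime p" "a \<le> b"
  shows "multiplicity p (fact a :: nat) \<le> multiplicity p (fact b :: nat)"
  using multiplicity_fact_add_le[OF assms(1), of a "b - a"] assms(2) by simp

lemma multiplicity_fact_div:
  fixes p :: nat
  assumes "prime p"
  shows "multiplicity p (fact n :: nat) = n div p + multiplicity p (fact (n div p) :: nat)"
proof (induction n)
  case 0
  then show ?case by simp
next
  case (Suc n)
  have p0: "p \<noteq> 0" and p1: "\<not> is_unit p"
    using assms by (auto simp: prime_gt_0_nat)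
  have fact_Suc_mult: "multiplicity p (fact (Suc k) :: nat)
                         = multiplicity p (Suc k) + multiplicity p (fact k :: nat)" for k
    using assms by (simp add: prime_elem_multiplicity_mult_distrib del: mult_Suc)
  show ?case
  proof (cases "p dvd Suc n")
    case True
    then obtain k where k: "Suc n = p * k" ..
    have k0: "k \<noteq> 0"
      using k by (metis mult_0_right nat.distinct(1))
    have "Suc n div p = Suc (n div p)"
      using True by (simp add: div_Suc dvd_eq_mod_eq_0)
    moreover have "Suc n div p = k"
      using k p0 by simp
    moreover have "multiplicity p (Suc n) = Suc (multiplicity p k)"
      unfolding k by (rule multiplicity_times_same[OF k0 p1 p0])
    ultimately show ?thesis
      using Suc.IH fact_Suc_mult[of n] fact_Suc_mult[of "n div p"] by simp
  next
    case False
    then have "Suc n div p = n div p"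
      by (simp add: div_Suc dvd_eq_mod_eq_0)
    moreover have "multiplicity p (Suc n) = 0"
      using False by (rule not_dvd_imp_multiplicity_0)
    ultimately show ?thesis
      using Suc.IH fact_Suc_mult[of n] by simp
  qed
qed

lemma multiplicity_fact_le:
  fixes p :: nat
  assumes "prime p" "n \<ge> 1"
  shows "(p - 1) * multiplicity p (fact n :: nat) \<le> n - 1"
  using assms(2)
proof (induction n rule: less_induct)
  case (less n)
  have p2: "p \<ge> 2"
    using assms(1) prime_ge_2_nat by blast
  define j where "j = n div p"
  have v: "multiplicity p (fact n :: nat) = j + multiplicity p (fact j :: nat)"
    unfolding j_def by (rule multiplicity_fact_div[OF assms(1)])
  show ?case
  proof (cases "j = 0")
    case True
    then show ?thesis using v by simp
  next
    case False
    have "j < n"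
      unfolding j_def using p2 less.prems by (intro div_less_dividend) auto
    then have IH: "(p - 1) * multiplicity p (fact j :: nat) \<le> j - 1"
      using less.IH False by simp
    have "(p - 1) * multiplicity p (fact n :: nat) = (p - 1) * j + (p - 1) * multiplicity p (fact j :: nat)"
      using v by (simp add: add_mult_distrib2)
    also have "\<dots> \<le> (p - 1) * j + (j - 1)"
      using IH by simp
    also have "\<dots> = p * j - 1"
      using False p2 by (simp add: diff_mult_distrib)
    also have "\<dots> \<le> n - 1"
      unfolding j_def by (simp add: diff_le_mono)
    finally show ?thesis .
  qed
qed

lemma multiplicity_fact_le_div:
  fixes p :: nat
  assumes "prime p" "n \<ge> 1"
  shows "multiplicity p (fact n :: nat) \<le> (n - 1) div (p - 1)"
  using multiplicity_fact_le[OF assms] prime_ge_2_nat[OF assms(1)]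
  by (simp add: less_eq_div_iff_mult_less_eq mult.commute)

lemma a_p_superadditive:
  fixes p :: nat
  assumes "prime p" "k + l \<le> n"
  shows "a_p p k + a_p p l \<le> a_p p n"
proof -
  define q where "q = p - 1"
  have "k div q + l div q \<le> (k + l) div q"
    using div_add1_eq[of k l q] by linarith
  also have "\<dots> \<le> n div q"
    using assms(2) by (rule div_le_mono)
  finally have sum_le: "k div q + l div q \<le> n div q" .
  have "multiplicity p (fact (k div q) :: nat) + multiplicity p (fact (l div q) :: nat)
          \<le> multiplicity p (fact (n div q) :: nat)"
    using multiplicity_fact_add_le[OF assms(1)] multiplicity_fact_mono[OF assms(1) sum_le]
    by (rule order_trans)
  then show ?thesis
    using sum_le unfolding a_p_def q_def by simp
qed

lemma a_p_add_ge:
  fixes p :: nat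
  assumes "prime p" "n \<ge> 1"
  shows "a_p p (m + 1) + multiplicity p (fact n :: nat) \<le> a_p p (m + n)"
proof -
  define q where "q = p - 1"
  have "(m + 1) div q + (n - 1) div q \<le> (m + n) div q"
    using div_add1_eq[of "m + 1" "n - 1" q] assms(2) by simp
  moreover have "multiplicity p (fact n :: nat) \<le> (n - 1) div q"
    unfolding q_def using assms by (rule multiplicity_fact_le_div)
  moreover have "multiplicity p (fact ((m + 1) div q) :: nat) \<le> multiplicity p (fact ((m + n) div q) :: nat)"
    using assms by (intro multiplicity_fact_mono div_le_mono) auto
  ultimately show ?thesis
    unfolding a_p_def q_def by simp
qed

theorem mainTheorem5:
  fixes p :: nat
  assumes "prime p"
  shows "(\<forall>n k l :: nat. n \<ge> k + l \<longrightarrow> a_p p n \<ge> a_p p k + a_p p l)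
       \<and> (\<forall>m n :: nat. n \<ge> 1 \<longrightarrow>
            a_p p (m + n) \<ge> a_p p (m + 1) + multiplicity p (fact n :: nat))"
  using a_p_superadditive[OF assms] a_p_add_ge[OF assms] by blast

end
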